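(* Let $k\ge 2$ be an integer that is not a perfect square. If either (R1) $k$ is prime, or (R2) $k=\alpha^{n}$ with $\alpha$ prime and $n$ odd, then $R_k=\{0,\,k-1\}$ (so $\upsilon=2$), i.e. every solution $(t,\xi)$ of $T_\xi=kT_t$ satisfies $\xi\equiv 0$ or $\xi\equiv k-1 \pmod k$, and both remainders occur.
   Context: For an integer $m\ge 0$, $T_m=m(m+1)/2$ denotes the $m$-th triangular number. For a non-square integer $k\ge 2$, consider the equation $T_\xi=k\,T_t$ in nonnegative integers $t,\xi$. Let $R_k=\{\xi \bmod k : \exists\, t\ge 0 \text{ with } T_\xi=kT_t\}$, the set of least nonnegative remainders modulo $k$ of all $\xi$ occurring in solutions $(t,\xi)$, and $\upsilon=|R_k|$. *)

theory Defs
  imports "HOL-Computational_Algebra.Primes"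
begin

definition tri :: "nat \<Rightarrow> nat" where
  "tri m = m * (m + 1) div 2"

definition R_set :: "nat \<Rightarrow> nat set" where
  "R_set k = {\<xi> mod k | \<xi> t. tri \<xi> = k * tri t}"

end

theory Submission
  imports Defs "HOL-Analysis.Kronecker_Approximation_Theorem"
begin

text \<open>
  Since \<open>T\<^sub>\<xi> = k T\<^sub>t\<close> means \<open>\<xi>(\<xi>+1) = k t(t+1)\<close> and \<open>\<xi>\<close>, \<open>\<xi>+1\<close> are coprime, the prime power
  \<open>k\<close> divides \<open>\<xi>\<close> or \<open>\<xi>+1\<close>; so only the remainders 0 and \<open>k-1\<close> occur, and 0 occurs for
  \<open>\<xi> = t = 0\<close>. Writing \<open>X = 2\<xi>+1\<close>, \<open>Y = 2t+1\<close> turns the equation into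
  \<open>X\<^sup>2 - kY\<^sup>2 = 1 - k\<close>. A solution \<open>A\<^sup>2 - kB\<^sup>2 = 1\<close> of Pell's equation with \<open>A\<close> odd and \<open>B\<close>
  even (obtained by squaring any nontrivial one) yields the two odd solutions
  \<open>(X, Y) = (kB \<plusminus> A, A \<plusminus> B)\<close>, whose \<open>\<xi>\<close>-values add up to \<open>kB - 1\<close>; they cannot both be
  divisible by \<open>k\<close>, so \<open>k-1\<close> occurs as well. Pell's equation is solved by the classical
  pigeonhole argument on the infinitely many good rational approximations of \<open>\<surd>k\<close>.
\<close>

lemma sqrt_nonsquare_irrational:
  fixes D :: nat
  assumes "\<not> (\<exists>m. D = m ^ 2)"
  shows "sqrt (real D) \<notin> \<rat>"
proof
  assume "sqrt (real D) \<in> \<rat>"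
  then obtain m n :: nat where "n \<noteq> 0" and "\<bar>sqrt (real D)\<bar> = real m / real n" and "coprime m n"
    by (rule Rats_abs_nat_div_natE)
  then have "real n * sqrt (real D) = real m"
    by (simp add: field_simps)
  then have "real D * (real n)\<^sup>2 = (real m)\<^sup>2"
    by (metis of_nat_0_le_iff power_mult_distrib real_sqrt_pow2 mult.commute)
  then have D: "D * n\<^sup>2 = m\<^sup>2"
    by (metis of_nat_eq_iff of_nat_mult of_nat_power)
  have "coprime (n\<^sup>2) (m\<^sup>2)"
    using \<open>coprime m n\<close> by (simp add: coprime_commute)
  moreover have "n\<^sup>2 dvd m\<^sup>2"
    unfolding D[symmetric] by simp
  ultimately have "n = 1"
    using coprime_common_divisor[of "n\<^sup>2" "m\<^sup>2" "n\<^sup>2"] by simp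
  with D assms show False
    by auto
qed

lemma square_neq_nonsquare_mult_square:
  fixes D :: nat and h k :: int
  assumes "\<not> (\<exists>m. D = m ^ 2)" and "k \<noteq> 0"
  shows "h\<^sup>2 \<noteq> int D * k\<^sup>2"
proof
  assume "h\<^sup>2 = int D * k\<^sup>2"
  then have "(real_of_int \<bar>h\<bar>)\<^sup>2 = real D * (real_of_int \<bar>k\<bar>)\<^sup>2"
    by (metis of_int_mult of_int_of_nat_eq of_int_power power2_abs)
  then have "\<bar>h\<bar> = sqrt (real D) * \<bar>k\<bar>"
    by (metis abs_of_nonneg of_int_0_le_iff abs_ge_zero real_sqrt_abs real_sqrt_mult)
  then have "sqrt (real D) = \<bar>h\<bar> / \<bar>k\<bar>"
    using \<open>k \<noteq> 0\<close> by (simp add: field_simps)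
  then show False
    using sqrt_nonsquare_irrational[OF assms(1)] by (metis Rats_divide Rats_of_int)
qed

lemma approx_set_sqrt_norm_bound:
  fixes D :: nat and h k :: int
  assumes "(h, k) \<in> approx_set (sqrt (real D))"
  shows "\<bar>h\<^sup>2 - int D * k\<^sup>2\<bar> \<le> int D + 2"
proof -
  define s where "s = sqrt (real D)"
  have k: "k > 0" and approx: "\<bar>s - h / k\<bar> < 1 / k\<^sup>2"
    using assms by (auto simp: approx_set_def s_def)
  have s: "s \<ge> 0" "s\<^sup>2 = real D"
    by (simp_all add: s_def)
  have "k * (s - h / k) = k * s - h"
    using k by (simp add: field_simps)
  then have "\<bar>h - k * s\<bar> = k * \<bar>s - h / k\<bar>"
    using k by (metis abs_minus_commute abs_mult abs_of_pos of_int_0_less_iff)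
  also have "\<dots> < k * (1 / k\<^sup>2)"
    using k approx by (intro mult_strict_left_mono) auto
  finally have close: "\<bar>h - k * s\<bar> < 1 / k"
    using k by (simp add: power2_eq_square)
  have far: "\<bar>h + k * s\<bar> \<le> 1 / k + 2 * k * s"
  proof -
    have "k * s \<ge> 0"
      using k s by simp
    then show ?thesis
      using close unfolding abs_le_iff abs_less_iff by linarith
  qed
  have "real_of_int \<bar>h\<^sup>2 - int D * k\<^sup>2\<bar> = \<bar>h - k * s\<bar> * \<bar>h + k * s\<bar>"
    by (simp add: abs_mult[symmetric] power2_eq_square algebra_simps s(2)[symmetric])
  also have "\<dots> \<le> 1 / k * (1 / k + 2 * k * s)"
    using close far k by (intro mult_mono) auto
  also have "\<dots> = 1 / k\<^sup>2 + 2 * s"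
    using k by (simp add: field_simps power2_eq_square)
  also have "\<dots> \<le> 1 + (1 + s\<^sup>2)"
    using k sum_squares_bound[of s 1] by (intro add_mono) auto
  finally show ?thesis
    using s(2) by linarith
qed

lemma brahmagupta_identity:
  fixes D a b c d :: "'a :: comm_ring_1"
  shows "(a * c - D * b * d)\<^sup>2 - D * (a * d - c * b)\<^sup>2 = (a\<^sup>2 - D * b\<^sup>2) * (c\<^sup>2 - D * d\<^sup>2)"
  by (simp add: power2_eq_square algebra_simps)

lemma pell_solution_from_congruent_pair:
  fixes D :: nat and h1 k1 h2 k2 Q :: int
  assumes norm1: "h1\<^sup>2 - int D * k1\<^sup>2 = Q" and norm2: "h2\<^sup>2 - int D * k2\<^sup>2 = Q"
    and "Q \<noteq> 0" and "h2 mod Q = h1 mod Q" and "k2 mod Q = k1 mod Q"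
    and "k1 > 0" and "k2 > 0" and "(h1, k1) \<noteq> (h2, k2)"
  shows "\<exists>U V. V \<noteq> 0 \<and> U\<^sup>2 - int D * V\<^sup>2 = 1"
proof -
  have "Q dvd h2 - h1" "Q dvd k2 - k1"
    using assms(4,5) by (simp_all add: mod_eq_dvd_iff)
  then obtain s r where s: "h2 = h1 + Q * s" and r: "k2 = k1 + Q * r"
    by (metis dvdE diff_add_cancel add.commute)
  define U where "U = 1 + h1 * s - int D * k1 * r"
  define V where "V = h1 * r - k1 * s"
  have QU: "Q * U = h1 * h2 - int D * k1 * k2"
    unfolding U_def s r norm1[symmetric] by (simp add: power2_eq_square algebra_simps)
  have QV: "Q * V = h1 * k2 - h2 * k1"
    unfolding V_def s r by (simp add: algebra_simps)
  have "Q\<^sup>2 * (U\<^sup>2 - int D * V\<^sup>2) = (Q * U)\<^sup>2 - int D * (Q * V)\<^sup>2"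
    by (simp add: power2_eq_square algebra_simps)
  also have "\<dots> = Q\<^sup>2"
    unfolding QU QV brahmagupta_identity norm1 norm2 by (simp add: power2_eq_square)
  finally have pell: "U\<^sup>2 - int D * V\<^sup>2 = 1"
    using \<open>Q \<noteq> 0\<close> by simp
  have "V \<noteq> 0"
  proof
    assume "V = 0"
    then have cross: "h1 * k2 = h2 * k1"
      using QV by simp
    have "Q * k2\<^sup>2 = (h2 * k1)\<^sup>2 - int D * k1\<^sup>2 * k2\<^sup>2"
      unfolding cross[symmetric] norm1[symmetric] by (simp add: power2_eq_square algebra_simps)
    also have "\<dots> = Q * k1\<^sup>2"
      unfolding norm2[symmetric] by (simp add: power2_eq_square algebra_simps)
    finally have "k1 = k2"
      using \<open>Q \<noteq> 0\<close> \<open>k1 > 0\<close> \<open>k2 > 0\<close> by (simp add: power2_eq_iff_nonneg)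
    then show False
      using cross \<open>k1 > 0\<close> \<open>(h1, k1) \<noteq> (h2, k2)\<close> by simp
  qed
  with pell show ?thesis
    by blast
qed

theorem pell_equation_solvable:
  fixes D :: nat
  assumes nonsquare: "\<not> (\<exists>m. D = m ^ 2)"
  shows "\<exists>U V :: int. V \<noteq> 0 \<and> U\<^sup>2 - int D * V\<^sup>2 = 1"
proof -
  define A where "A = approx_set (sqrt (real D))"
  define N where "N = (\<lambda>(h, k). h\<^sup>2 - int D * k\<^sup>2)"
  define f where "f = (\<lambda>(h, k). (N (h, k), h mod N (h, k), k mod N (h, k)))"
  define B where "B = int D + 2"
  have "infinite A"
    using rational_iff_finite_approx_set sqrt_nonsquare_irrational[OF nonsquare] by (simp add: A_def)
  have approximant: "k > 0 \<and> N (h, k) \<noteq> 0 \<and> \<bar>N (h, k)\<bar> \<le> B" if "(h, k) \<in> A" for h k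
    using that approx_set_sqrt_norm_bound[of h k D] square_neq_nonsquare_mult_square[OF nonsquare, of k h]
    by (auto simp: A_def approx_set_def N_def B_def)
  \<comment> \<open>Pigeonhole on norm and residues modulo the norm, which range over a finite box.\<close>
  have "f ` A \<subseteq> {-B..B} \<times> {-B..B} \<times> {-B..B}"
  proof (rule image_subsetI)
    fix p assume "p \<in> A"
    moreover obtain h k where "p = (h, k)"
      by fastforce
    ultimately show "f p \<in> {-B..B} \<times> {-B..B} \<times> {-B..B}"
      using approximant[of h k] abs_mod_less[of "N (h, k)" h] abs_mod_less[of "N (h, k)" k]
      by (auto simp: f_def abs_le_iff abs_less_iff)
  qed
  then have "finite (f ` A)"
    by (rule finite_subset) auto
  then obtain p0 where "p0 \<in> A" and "infinite {p \<in> A. f p = f p0}"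
    using pigeonhole_infinite[OF \<open>infinite A\<close>] by blast
  then have "{p \<in> A. f p = f p0} - {p0} \<noteq> {}"
    by (intro infinite_imp_nonempty infinite_remove)
  then obtain p1 where "p1 \<in> {p \<in> A. f p = f p0} - {p0}"
    by blast
  then have "p1 \<in> A" "f p1 = f p0" "p1 \<noteq> p0"
    by auto
  obtain h1 k1 h2 k2 where "p0 = (h1, k1)" "p1 = (h2, k2)"
    by fastforce
  with \<open>p0 \<in> A\<close> \<open>p1 \<in> A\<close> \<open>f p1 = f p0\<close> \<open>p1 \<noteq> p0\<close> show ?thesis
    using approximant[of h1 k1] approximant[of h2 k2]
    by (intro pell_solution_from_congruent_pair[of h1 D k1 "N (h1, k1)" h2 k2]) (auto simp: f_def N_def)
qed

lemma double_tri: "2 * tri m = m * (m + 1)"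
  unfolding tri_def by simp

lemma tri_eq_mult_tri_iff: "tri \<xi> = k * tri t \<longleftrightarrow> \<xi> * (\<xi> + 1) = k * (t * (t + 1))"
  by (metis double_tri mult.left_commute mult_cancel_left zero_neq_numeral)

lemma tri_solution_mod_prime_power:
  fixes p n :: nat
  assumes "prime p" and "n > 0" and "tri \<xi> = p ^ n * tri t"
  shows "\<xi> mod p ^ n = 0 \<or> \<xi> mod p ^ n = p ^ n - 1"
proof -
  have dvd: "p ^ n dvd \<xi> * (\<xi> + 1)"
    using assms(3) by (simp add: tri_eq_mult_tri_iff)
  have "\<not> p dvd \<xi> \<or> \<not> p dvd \<xi> + 1"
    using \<open>prime p\<close> by (metis dvd_add_right_iff nat_dvd_1_iff_1 not_prime_1)
  then have "p ^ n dvd \<xi> \<or> p ^ n dvd \<xi> + 1"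
    using prime_power_dvd_multD[of p n] dvd \<open>prime p\<close> \<open>n > 0\<close> by (metis mult.commute prime_imp_prime_elem)
  then show ?thesis
  proof
    assume "p ^ n dvd \<xi> + 1"
    then have "Suc (\<xi> mod p ^ n) = p ^ n"
      by (metis Suc_eq_plus1 dvd_imp_mod_0 mod_Suc nat.distinct(1))
    then show ?thesis
      by linarith
  qed simp
qed

lemma tri_solution_of_odd_pair:
  fixes k :: nat and X Y :: int
  assumes "X > 0" and "Y > 0" and "odd X" and "odd Y" and "X\<^sup>2 - int k * Y\<^sup>2 = 1 - int k"
  obtains \<xi> t where "tri \<xi> = k * tri t" and "2 * int \<xi> + 1 = X"
proof -
  have odd_pos: "\<exists>n :: nat. Z = 2 * int n + 1" if "odd Z" and "Z > 0" for Z :: int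
  proof -
    from \<open>odd Z\<close> obtain a where "Z = 2 * a + 1"
      by (rule oddE)
    with \<open>Z > 0\<close> show ?thesis
      by (intro exI[of _ "nat a"]) auto
  qed
  obtain \<xi> t :: nat where X: "X = 2 * int \<xi> + 1" and Y: "Y = 2 * int t + 1"
    using odd_pos[of X] odd_pos[of Y] assms(1-4) by blast
  have "4 * int (\<xi> * (\<xi> + 1)) = 4 * int (k * (t * (t + 1)))"
    using assms(5) unfolding X Y by (simp add: power2_eq_square algebra_simps)
  then have "tri \<xi> = k * tri t"
    unfolding tri_eq_mult_tri_iff by linarith
  with X show thesis
    using that by blast
qed

lemma pell_solution_odd_even:
  fixes k :: nat
  assumes "\<not> (\<exists>m. k = m ^ 2)"
  obtains A B :: int where "A\<^sup>2 - int k * B\<^sup>2 = 1" and "A > 0" and "B > 0" and "odd A" and "even B"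
proof -
  obtain U V :: int where "V \<noteq> 0" and UV: "U\<^sup>2 - int k * V\<^sup>2 = 1"
    using pell_equation_solvable[OF assms] by blast
  \<comment> \<open>Squaring the unit U + V sqrt k makes the second coordinate even.\<close>
  define A where "A = U\<^sup>2 + int k * V\<^sup>2"
  define B where "B = 2 * \<bar>U\<bar> * \<bar>V\<bar>"
  have AB: "A\<^sup>2 - int k * B\<^sup>2 = 1"
  proof -
    have "A\<^sup>2 - int k * B\<^sup>2 = (U\<^sup>2 - int k * V\<^sup>2)\<^sup>2"
      unfolding A_def B_def by (simp add: power2_eq_square algebra_simps)
    with UV show ?thesis
      by simp
  qed
  have "U \<noteq> 0"
    using UV zero_le_mult_iff[of "int k" "V\<^sup>2"] by fastforce
  then have "A > 0" and "B > 0"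
    using \<open>V \<noteq> 0\<close> by (auto simp: A_def B_def add_pos_nonneg)
  moreover have "even B"
    by (simp add: B_def)
  moreover have "odd A"
  proof -
    have "A\<^sup>2 = 1 + int k * B\<^sup>2"
      using AB by linarith
    with \<open>even B\<close> have "odd (A\<^sup>2)"
      by simp
    then show ?thesis
      by simp
  qed
  ultimately show thesis
    using AB that by blast
qed

lemma tri_solution_pair_from_pell:
  fixes k :: nat and A B :: int
  assumes "k \<ge> 2" and pell: "A\<^sup>2 - int k * B\<^sup>2 = 1"
    and "A > 0" and "B > 0" and "odd A" and "even B"
  obtains \<xi>1 t1 \<xi>2 t2 where "tri \<xi>1 = k * tri t1" and "tri \<xi>2 = k * tri t2"
    and "int (\<xi>1 + \<xi>2 + 1) = int k * B"
proof -
  have "(int k * B + A)\<^sup>2 - int k * (A + B)\<^sup>2 = (1 - int k) * (A\<^sup>2 - int k * B\<^sup>2)"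
    and "(int k * B - A)\<^sup>2 - int k * (A - B)\<^sup>2 = (1 - int k) * (A\<^sup>2 - int k * B\<^sup>2)"
    by (simp_all add: power2_eq_square algebra_simps)
  then have identity: "(int k * B + A)\<^sup>2 - int k * (A + B)\<^sup>2 = 1 - int k"
    "(int k * B - A)\<^sup>2 - int k * (A - B)\<^sup>2 = 1 - int k"
    using pell by simp_all
  have odd: "odd (int k * B + A)" "odd (A + B)" "odd (int k * B - A)" "odd (A - B)"
    using \<open>odd A\<close> \<open>even B\<close> by simp_all
  have "B\<^sup>2 \<ge> 1" and "int k \<ge> 2"
    using \<open>B > 0\<close> \<open>k \<ge> 2\<close> by (auto simp: one_le_power)
  then have kB: "int k * B\<^sup>2 \<ge> 2 * B\<^sup>2"
    by (intro mult_right_mono) auto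
  have "B\<^sup>2 < A\<^sup>2"
    using pell kB \<open>B\<^sup>2 \<ge> 1\<close> by linarith
  then have "A > B"
    using \<open>A > 0\<close> by (simp add: power_less_imp_less_base)
  have "(int k * B)\<^sup>2 = int k * (int k * B\<^sup>2)"
    by (simp add: power2_eq_square)
  also have "\<dots> \<ge> 2 * (int k * B\<^sup>2)"
    using \<open>int k \<ge> 2\<close> kB \<open>B\<^sup>2 \<ge> 1\<close> by (intro mult_right_mono) auto
  finally have "A\<^sup>2 < (int k * B)\<^sup>2"
    using pell kB \<open>B\<^sup>2 \<ge> 1\<close> by linarith
  then have "int k * B > A"
    using \<open>B > 0\<close> by (simp add: power_less_imp_less_base)
  have "int k * B + A > 0" and "A + B > 0" and "int k * B - A > 0" and "A - B > 0"
    using \<open>A > B\<close> \<open>int k * B > A\<close> \<open>B > 0\<close> by simp_all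
  obtain \<xi>1 t1 where "tri \<xi>1 = k * tri t1" and \<xi>1: "2 * int \<xi>1 + 1 = int k * B + A"
    using tri_solution_of_odd_pair[OF \<open>int k * B + A > 0\<close> \<open>A + B > 0\<close> odd(1,2) identity(1)] .
  moreover obtain \<xi>2 t2 where "tri \<xi>2 = k * tri t2" and \<xi>2: "2 * int \<xi>2 + 1 = int k * B - A"
    using tri_solution_of_odd_pair[OF \<open>int k * B - A > 0\<close> \<open>A - B > 0\<close> odd(3,4) identity(2)] .
  moreover have "int (\<xi>1 + \<xi>2 + 1) = int k * B"
    using \<xi>1 \<xi>2 by simp
  ultimately show thesis
    using that by blast
qed

lemma tri_solution_in_R_set: "tri \<xi> = k * tri t \<Longrightarrow> \<xi> mod k \<in> R_set k"
  unfolding R_set_def by blast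

lemma minus_one_in_R_set:
  fixes k :: nat
  assumes "k \<ge> 2" and "\<not> (\<exists>m. k = m ^ 2)" and "R_set k \<subseteq> {0, k - 1}"
  shows "k - 1 \<in> R_set k"
proof (rule ccontr)
  assume "k - 1 \<notin> R_set k"
  have only_zero: "\<xi> mod k = 0" if "tri \<xi> = k * tri t" for \<xi> t
  proof -
    have "\<xi> mod k \<in> R_set k"
      using that by (rule tri_solution_in_R_set)
    with assms(3) have "\<xi> mod k = 0 \<or> \<xi> mod k = k - 1"
      by blast
    with \<open>\<xi> mod k \<in> R_set k\<close> \<open>k - 1 \<notin> R_set k\<close> show ?thesis
      by auto
  qed
  obtain A B :: int where "A\<^sup>2 - int k * B\<^sup>2 = 1" "A > 0" "B > 0" "odd A" "even B"
    using pell_solution_odd_even[OF assms(2)] .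
  then obtain \<xi>1 t1 \<xi>2 t2 where sol1: "tri \<xi>1 = k * tri t1" and sol2: "tri \<xi>2 = k * tri t2"
    and sum: "int (\<xi>1 + \<xi>2 + 1) = int k * B"
    using tri_solution_pair_from_pell[OF assms(1)] by blast
  have "k dvd \<xi>1 + \<xi>2"
    using only_zero[OF sol1] only_zero[OF sol2] by (simp add: dvd_add mod_eq_0_iff_dvd)
  moreover have "k dvd \<xi>1 + \<xi>2 + 1"
    using sum by (metis dvd_triv_left int_dvd_int_iff)
  ultimately have "k dvd 1"
    by (metis dvd_add_right_iff add.assoc)
  with \<open>k \<ge> 2\<close> show False
    by simp
qed

theorem proposition2:
  fixes k :: nat
  assumes "k \<ge> 2"
    and "\<not> (\<exists>m. k = m ^ 2)"
    and "prime k \<or> (\<exists>\<alpha> n. prime \<alpha> \<and> odd n \<and> k = \<alpha> ^ n)"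
  shows "R_set k = {0, k - 1} \<and> card (R_set k) = 2"
proof -
  obtain \<alpha> n where "prime \<alpha>" and k: "k = \<alpha> ^ n"
    using assms(3) by (metis power_one_right)
  with \<open>k \<ge> 2\<close> have "n > 0"
    by (cases n) auto
  have "R_set k \<subseteq> {0, k - 1}"
    using tri_solution_mod_prime_power[OF \<open>prime \<alpha>\<close> \<open>n > 0\<close>] by (fastforce simp: R_set_def k)
  moreover have "0 \<in> R_set k"
    using tri_solution_in_R_set[of 0 k 0] by (simp add: tri_def)
  moreover have "k - 1 \<in> R_set k"
    using minus_one_in_R_set[OF assms(1,2)] calculation(1) .
  ultimately have "R_set k = {0, k - 1}"
    by blast
  with \<open>k \<ge> 2\<close> show ?thesis
    by simp
qed

end
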